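(* Let $(P,\preceq)$ be a locally finite meet semilattice, $S\subseteq P$ a finite meet closed set, and suppose $x_i\in S$ generates a double-chain set in $S$, with $\mathrm{meetcl}(C_S(x_i))\setminus C_S(x_i)=A_i\cup B_i$ where $A_i,B_i$ are disjoint chains. Then there is at most one element $z\in C_S(x_i)$ that attaches to both $A_i$ and $B_i$.
   Context: $C_S(x)$ is the set of elements of $S$ covered by $x$ in $S$; $\mathrm{meetcl}(C)$ is the set of all finite meets of elements of $C$. An element $x\in S$ generates a double-chain set in $S$ if $\mathrm{meetcl}(C_S(x))\setminus C_S(x)$ is a union of two disjoint (possibly empty) chains. Given such chains $A_i,B_i$ for $x_i$, an element $z\in C_S(x_i)$ attaches to $A_i$ (resp. $B_i$) if there is $a\in A_i$ (resp. $b\in B_i$) that is covered by $z$ in the poset $\mathrm{meetcl}(C_S(x_i))$. *)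

theory Defs
  imports Main
begin

definition locally_finite :: "'a::order itself \<Rightarrow> bool" where
  "locally_finite _ \<longleftrightarrow> (\<forall>a b::'a. finite {x. a \<le> x \<and> x \<le> b})"

definition meet_closed :: "'a::semilattice_inf set \<Rightarrow> bool" where
  "meet_closed S \<longleftrightarrow> (\<forall>a\<in>S. \<forall>b\<in>S. inf a b \<in> S)"

definition covered_in :: "'a::order set \<Rightarrow> 'a \<Rightarrow> 'a \<Rightarrow> bool" where
  "covered_in T y x \<longleftrightarrow> y \<in> T \<and> x \<in> T \<and> y < x \<and> \<not> (\<exists>z\<in>T. y < z \<and> z < x)"

definition covset :: "'a::order set \<Rightarrow> 'a \<Rightarrow> 'a set" where
  "covset S x = {y. covered_in S y x}"

definition meetcl :: "'a::semilattice_inf set \<Rightarrow> 'a set" where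
  "meetcl C = {Inf_fin D | D. D \<subseteq> C \<and> finite D \<and> D \<noteq> {}}"

definition is_chain :: "'a::order set \<Rightarrow> bool" where
  "is_chain A \<longleftrightarrow> (\<forall>a\<in>A. \<forall>b\<in>A. a \<le> b \<or> b \<le> a)"

definition attaches :: "'a::semilattice_inf set \<Rightarrow> 'a \<Rightarrow> 'a \<Rightarrow> 'a set \<Rightarrow> bool" where
  "attaches S x z A \<longleftrightarrow> (\<exists>a\<in>A. covered_in (meetcl (covset S x)) a z)"

end

theory Submission
  imports Defs
begin

text \<open>Let distinct z1, z2 \<in> C_S(x) attach to the chain A via a1 \<prec> z1 and a2 \<prec> z2 in
  meetcl(C_S(x)). As a1, a2 are comparable, one of them, say a1, lies below z1 \<sqinter> z2; since
  z1, z2 are incomparable, z1 \<sqinter> z2 < z1, and as z1 \<sqinter> z2 \<in> meetcl(C_S(x)) the covering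
  a1 \<prec> z1 forces a1 = z1 \<sqinter> z2. So z1 \<sqinter> z2 \<in> A, likewise z1 \<sqinter> z2 \<in> B, contradicting
  A \<inter> B = {}.\<close>

lemma inf_in_meetcl:
  fixes a b :: "'a::semilattice_inf"
  assumes "a \<in> C" "b \<in> C"
  shows "inf a b \<in> meetcl C"
  unfolding meetcl_def using assms by (intro CollectI exI[of _ "{a, b}"]) auto

lemma covset_eq_if_le:
  assumes "y \<in> covset S x" "z \<in> covset S x" "y \<le> z"
  shows "y = z"
  using assms by (auto simp: covset_def covered_in_def le_less)

lemma covered_in_eq_inf:
  fixes M :: "'a::semilattice_inf set"
  assumes "covered_in M a z1" "a \<le> z2" "inf z1 z2 \<in> M" "\<not> z1 \<le> z2"
  shows "a = inf z1 z2"
proof -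
  have "a \<le> inf z1 z2" using assms(1,2) unfolding covered_in_def by auto
  moreover have "inf z1 z2 < z1" using assms(4) by (metis inf.absorb_iff1 inf_le1 le_less)
  ultimately show ?thesis using assms(1,3) unfolding covered_in_def by (metis le_less)
qed

lemma inf_in_chain_if_covered:
  fixes M :: "'a::semilattice_inf set"
  assumes "is_chain A" "a1 \<in> A" "a2 \<in> A"
    and "covered_in M a1 z1" "covered_in M a2 z2"
    and "inf z1 z2 \<in> M" "\<not> z1 \<le> z2" "\<not> z2 \<le> z1"
  shows "inf z1 z2 \<in> A"
proof -
  have "a1 \<le> a2 \<or> a2 \<le> a1" using assms(1-3) unfolding is_chain_def by blast
  moreover have "a1 \<le> z1" "a2 \<le> z2" using assms(4,5) unfolding covered_in_def by auto
  ultimately consider "a1 \<le> z2" | "a2 \<le> z1" by fastforce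
  then show ?thesis
  proof cases
    case 1
    then show ?thesis using covered_in_eq_inf[OF assms(4) _ assms(6,7)] assms(2) by simp
  next
    case 2
    then have "a2 = inf z2 z1"
      using covered_in_eq_inf[OF assms(5)] assms(6,8) by (simp add: inf_commute)
    then show ?thesis using assms(3) by (simp add: inf_commute)
  qed
qed

theorem lemma2p3:
  fixes S :: "'a::semilattice_inf set" and x :: 'a and A B :: "'a set"
  assumes "locally_finite TYPE('a)"
    and "finite S" and "meet_closed S"
    and "x \<in> S"
    and "meetcl (covset S x) - covset S x = A \<union> B"
    and "A \<inter> B = {}" and "is_chain A" and "is_chain B"
  shows "\<forall>z1 z2. z1 \<in> covset S x \<and> attaches S x z1 A \<and> attaches S x z1 B
           \<and> z2 \<in> covset S x \<and> attaches S x z2 A \<and> attaches S x z2 B \<longrightarrow> z1 = z2"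
proof (intro allI impI, rule ccontr)
  fix z1 z2
  assume z: "z1 \<in> covset S x \<and> attaches S x z1 A \<and> attaches S x z1 B
           \<and> z2 \<in> covset S x \<and> attaches S x z2 A \<and> attaches S x z2 B"
    and "z1 \<noteq> z2"
  then have incomparable: "\<not> z1 \<le> z2" "\<not> z2 \<le> z1"
    using covset_eq_if_le[of z1 S x z2] covset_eq_if_le[of z2 S x z1] by auto
  have meet: "inf z1 z2 \<in> meetcl (covset S x)" using z by (simp add: inf_in_meetcl)
  have "inf z1 z2 \<in> C" if C: "is_chain C" "attaches S x z1 C" "attaches S x z2 C" for C
  proof -
    obtain a1 a2 where "a1 \<in> C" "covered_in (meetcl (covset S x)) a1 z1"
      and "a2 \<in> C" "covered_in (meetcl (covset S x)) a2 z2"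
      using C(2,3) unfolding attaches_def by blast
    then show ?thesis using inf_in_chain_if_covered[OF C(1) _ _ _ _ meet incomparable] by blast
  qed
  then have "inf z1 z2 \<in> A \<inter> B" using z assms(7,8) by blast
  with assms(6) show False by simp
qed

end
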